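(* For $m\ge1$, the space $(\mathbb Z^m,d_a)$ admits a linear $1$-perfect code if and only if there exists an Abelian planar difference set of order $m$.
   Context: $d_a(\mathbf x,\mathbf y)=\max\{\sum_{i:x_i>y_i}(x_i-y_i),\sum_{i:x_i<y_i}(y_i-x_i)\}$ on $\mathbb Z^m$. A linear code is a sublattice (subgroup) of $\mathbb Z^m$. A code $\mathcal C$ is $r$-perfect if the balls $\{\mathbf y:d_a(\mathbf y,\mathbf x)\le r\}$, $\mathbf x\in\mathcal C$, are pairwise disjoint and cover $\mathbb Z^m$. An Abelian planar difference set of order $m$ is a subset $D$ of cardinality $m+1$ of an Abelian group $G$ of order $m^2+m+1$ such that every nonzero element of $G$ can be written as $a-b$ with $a,b\in D$ in exactly one way. *)

theory Defs
  imports "HOL-Algebra.Group"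
begin

text \<open>Points of Z^m: integer vectors indexed by 0..m-1, represented as
  functions nat => int vanishing outside {..<m}.\<close>
definition Zm :: "nat \<Rightarrow> (nat \<Rightarrow> int) set" where
  "Zm m = {x. \<forall>i\<ge>m. x i = 0}"

definition d_a :: "nat \<Rightarrow> (nat \<Rightarrow> int) \<Rightarrow> (nat \<Rightarrow> int) \<Rightarrow> int" where
  "d_a m x y = max (\<Sum>i\<in>{i. i < m \<and> x i > y i}. x i - y i)
                   (\<Sum>i\<in>{i. i < m \<and> x i < y i}. y i - x i)"

definition ball_a :: "nat \<Rightarrow> (nat \<Rightarrow> int) \<Rightarrow> int \<Rightarrow> (nat \<Rightarrow> int) set" where
  "ball_a m x r = {y \<in> Zm m. d_a m y x \<le> r}"

definition linear_code :: "nat \<Rightarrow> (nat \<Rightarrow> int) set \<Rightarrow> bool" where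
  "linear_code m C \<longleftrightarrow> C \<subseteq> Zm m \<and> (\<lambda>_. 0) \<in> C \<and>
     (\<forall>x\<in>C. \<forall>y\<in>C. (\<lambda>i. x i + y i) \<in> C) \<and> (\<forall>x\<in>C. (\<lambda>i. - x i) \<in> C)"

definition perfect_code :: "nat \<Rightarrow> int \<Rightarrow> (nat \<Rightarrow> int) set \<Rightarrow> bool" where
  "perfect_code m r C \<longleftrightarrow> C \<subseteq> Zm m \<and>
     (\<forall>x\<in>C. \<forall>x'\<in>C. x \<noteq> x' \<longrightarrow> ball_a m x r \<inter> ball_a m x' r = {}) \<and>
     (\<Union>x\<in>C. ball_a m x r) = Zm m"

text \<open>Abelian planar difference set of order m in the group G (written
  multiplicatively, so a - b is a \<otimes> inv b).\<close>
definition abelian_planar_difference_set :: "('a, 'b) monoid_scheme \<Rightarrow> 'a set \<Rightarrow> nat \<Rightarrow> bool" where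
  "abelian_planar_difference_set G D m \<longleftrightarrow>
     comm_group G \<and> finite (carrier G) \<and> card (carrier G) = m^2 + m + 1 \<and>
     D \<subseteq> carrier G \<and> card D = m + 1 \<and>
     (\<forall>g\<in>carrier G. g \<noteq> \<one>\<^bsub>G\<^esub> \<longrightarrow>
        (\<exists>!p. p \<in> D \<times> D \<and> g = fst p \<otimes>\<^bsub>G\<^esub> inv\<^bsub>G\<^esub> (snd p)))"

end

theory Submission
  imports Defs "HOL-Algebra.FiniteProduct" "HOL-Algebra.Weak_Morphisms"
    "HOL-Library.Function_Algebras"
begin

(* A linear code C in Z^m is the kernel of the quotient map Z^m \<rightarrow> Z^m/C, and the kernel of any
   homomorphism \<psi> on Z^m is a linear code.  The d_a-ball of radius 1 around 0 consists exactly
   of the differences e_a - e_b of the m + 1 vectors e_0 = 0, e_1, ..., e_m, and by translation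
   invariance ker \<psi> is 1-perfect iff \<psi> maps this ball bijectively onto its image.  For a
   perfect code C the images of e_0, ..., e_m in the finite abelian group Z^m/C therefore form a
   planar difference set.  Conversely, a planar difference set {d_0, ..., d_m} in G defines the
   homomorphism e_i \<mapsto> d_i - d_0, which sends e_a - e_b to d_a - d_b; it is hence bijective
   on the ball, and its kernel is a 1-perfect linear code. *)

section \<open>The lattice and its unit ball\<close>

lemma Zm_diff: "x \<in> Zm m \<Longrightarrow> y \<in> Zm m \<Longrightarrow> x - y \<in> Zm m"
  by (simp add: Zm_def)

definition lattice_group :: "nat \<Rightarrow> (nat \<Rightarrow> int) monoid" where
  "lattice_group m = \<lparr>carrier = Zm m, mult = (+), one = 0\<rparr>"

lemma lattice_group_simps [simp]:
  "carrier (lattice_group m) = Zm m" "x \<otimes>\<^bsub>lattice_group m\<^esub> y = x + y" "\<one>\<^bsub>lattice_group m\<^esub> = 0"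
  by (simp_all add: lattice_group_def)

lemma comm_group_lattice_group: "comm_group (lattice_group m)"
proof (rule comm_groupI)
  show "\<exists>y\<in>carrier (lattice_group m). y \<otimes>\<^bsub>lattice_group m\<^esub> x = \<one>\<^bsub>lattice_group m\<^esub>"
    if "x \<in> carrier (lattice_group m)" for x
    using that by (intro bexI[of _ "- x"]) (auto simp: Zm_def)
qed (auto simp: Zm_def add.assoc add.commute)

lemma inv_lattice_group [simp]: "x \<in> Zm m \<Longrightarrow> inv\<^bsub>lattice_group m\<^esub> x = - x"
  by (rule group.inv_equality[OF comm_group.axioms(2)[OF comm_group_lattice_group]])
     (auto simp: Zm_def)

lemma linear_code_iff_subgroup: "linear_code m C \<longleftrightarrow> subgroup C (lattice_group m)"
proof -
  have [simp]: "(\<lambda>i. x i + y i) = x + y" "(\<lambda>i. - x i) = - x" for x y :: "nat \<Rightarrow> int"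
    by auto
  show ?thesis
    unfolding linear_code_def subgroup_def
    by (auto simp: zero_fun_def[symmetric] subset_iff)
qed

(* unit_vec (Suc i) is the i-th standard basis vector and unit_vec 0 = 0: the unit ball is
   exactly the set of differences of these m + 1 vectors (ball_a_zero_one). *)
definition unit_vec :: "nat \<Rightarrow> nat \<Rightarrow> int" where
  "unit_vec a = (\<lambda>i. if a = Suc i then 1 else 0)"

lemma unit_vec_apply: "unit_vec a i = (if a = Suc i then 1 else 0)"
  by (simp add: unit_vec_def)

lemma unit_vec_0 [simp]: "unit_vec 0 = 0"
  by (simp add: unit_vec_def zero_fun_def)

lemma unit_vec_Zm: "a \<le> m \<Longrightarrow> unit_vec a \<in> Zm m"
  by (simp add: unit_vec_def Zm_def)

lemma unit_vec_inj: "unit_vec a = unit_vec b \<longleftrightarrow> a = b"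
proof
  assume eq: "unit_vec a = unit_vec b"
  show "a = b"
  proof (cases a)
    case 0 then show ?thesis using fun_cong[OF eq, of "b - 1"] by (cases b) (auto simp: unit_vec_def)
  next
    case (Suc j) then show ?thesis using fun_cong[OF eq, of j] by (auto simp: unit_vec_def split: if_splits)
  qed
qed simp

lemma unit_vec_add_eq_imp_eq:
  assumes eq: "unit_vec a + unit_vec d = unit_vec c + unit_vec b" and "a \<noteq> c"
  shows "a = b"
proof (cases a)
  case (Suc j)
  have "unit_vec a j + unit_vec d j = unit_vec c j + unit_vec b j"
    using eq by (metis plus_fun_apply)
  with Suc \<open>a \<noteq> c\<close> show ?thesis by (auto simp: unit_vec_apply split: if_splits)
next
  case 0
  with \<open>a \<noteq> c\<close> obtain k where k: "c = Suc k" by (cases c) auto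
  have "unit_vec a k + unit_vec d k = unit_vec c k + unit_vec b k"
    using eq by (metis plus_fun_apply)
  with 0 k have "d = c" by (auto simp: unit_vec_apply split: if_splits)
  with eq have "unit_vec a = unit_vec b" by (simp add: add.commute)
  then show ?thesis by (simp add: unit_vec_inj)
qed

lemma unit_vec_diff_eq_iff:
  "unit_vec a - unit_vec b = unit_vec c - unit_vec d \<longleftrightarrow> a = b \<and> c = d \<or> a = c \<and> b = d"
proof
  assume "unit_vec a - unit_vec b = unit_vec c - unit_vec d"
  then have eq: "unit_vec a + unit_vec d = unit_vec c + unit_vec b"
    by (simp add: algebra_simps)
  show "a = b \<and> c = d \<or> a = c \<and> b = d"
  proof (cases "a = c")
    case True
    with eq show ?thesis by (simp add: unit_vec_inj add.commute)
  next
    case False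
    have "a = b" using eq False by (rule unit_vec_add_eq_imp_eq)
    moreover have "c = d" using eq[symmetric] False[symmetric] by (rule unit_vec_add_eq_imp_eq)
    ultimately show ?thesis by simp
  qed
qed auto

lemma sum_unit_vec_le_one: "(\<Sum>i<m. unit_vec a i) \<le> 1"
proof (cases a)
  case (Suc j) then show ?thesis by (simp add: unit_vec_def eq_commute[of "Suc j"])
qed (simp add: unit_vec_def)

lemma sum_le_one_imp_unit_vec:
  fixes y :: "nat \<Rightarrow> int"
  assumes nonneg: "\<And>i. y i \<ge> 0" and sum: "(\<Sum>i<m. y i) \<le> 1"
  obtains a where "a \<le> m" "\<And>i. i < m \<Longrightarrow> y i = unit_vec a i"
proof (cases "\<forall>i<m. y i = 0")
  case True then show ?thesis by (intro that[of 0]) auto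
next
  case False
  then obtain j where j: "j < m" "y j \<noteq> 0" by blast
  have "y j + y i \<le> 1" if "i < m" "i \<noteq> j" for i
  proof -
    have "y j + y i = (\<Sum>k\<in>{j, i}. y k)" using that by simp
    also have "\<dots> \<le> (\<Sum>k<m. y k)" using that j by (intro sum_mono2) (auto simp: nonneg)
    finally show ?thesis using sum by simp
  qed
  moreover have "y j \<le> 1" using member_le_sum[of j "{..<m}" y] j nonneg sum by simp
  ultimately have "y j = 1" "\<And>i. i < m \<Longrightarrow> i \<noteq> j \<Longrightarrow> y i = 0"
    using j(2) nonneg by (smt (verit))+
  then show ?thesis using j by (intro that[of "Suc j"]) (auto simp: unit_vec_def)
qed

lemma d_a_eq: "d_a m x y = max (\<Sum>i<m. max (x i - y i) 0) (\<Sum>i<m. max (y i - x i) 0)"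
proof -
  have filter: "(\<Sum>i | i < m \<and> P i. f i) = (\<Sum>i<m. if P i then f i else 0)"
    for P and f :: "nat \<Rightarrow> int"
    by (simp add: sum.If_cases Collect_conj_eq lessThan_def Int_commute)
  have "(\<Sum>i | i < m \<and> P i. f i) = (\<Sum>i<m. max (f i) 0)"
    if "\<And>i. P i \<longleftrightarrow> f i > 0" for P and f :: "nat \<Rightarrow> int"
    unfolding filter using that by (intro sum.cong) (auto simp: max_def)
  from this[of "\<lambda>i. x i > y i" "\<lambda>i. x i - y i"] this[of "\<lambda>i. x i < y i" "\<lambda>i. y i - x i"]
  show ?thesis unfolding d_a_def by simp
qed

lemma ball_a_subset_Zm: "ball_a m c r \<subseteq> Zm m"
  by (auto simp: ball_a_def)

lemma mem_ball_a_iff: "c \<in> Zm m \<Longrightarrow> y \<in> ball_a m c r \<longleftrightarrow> y - c \<in> ball_a m 0 r"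
  by (auto simp: ball_a_def d_a_eq Zm_def)

lemma ball_a_zero_one: "ball_a m 0 1 = {unit_vec a - unit_vec b | a b. a \<le> m \<and> b \<le> m}"
proof (intro equalityI subsetI)
  fix x assume "x \<in> ball_a m 0 1"
  then have x: "x \<in> Zm m" "(\<Sum>i<m. max (x i) 0) \<le> 1" "(\<Sum>i<m. max (- x i) 0) \<le> 1"
    by (auto simp: ball_a_def d_a_eq)
  obtain a where a: "a \<le> m" "\<And>i. i < m \<Longrightarrow> max (x i) 0 = unit_vec a i"
    using sum_le_one_imp_unit_vec[OF _ x(2)] by auto
  obtain b where b: "b \<le> m" "\<And>i. i < m \<Longrightarrow> max (- x i) 0 = unit_vec b i"
    using sum_le_one_imp_unit_vec[OF _ x(3)] by auto
  have "x = unit_vec a - unit_vec b"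
  proof
    fix i show "x i = (unit_vec a - unit_vec b) i"
    proof (cases "i < m")
      case True
      then show ?thesis using a(2)[of i] b(2)[of i] by (simp add: max_def split: if_splits)
    next
      case False
      then show ?thesis using x(1) a(1) b(1) by (simp add: Zm_def unit_vec_apply)
    qed
  qed
  with a(1) b(1) show "x \<in> {unit_vec a - unit_vec b | a b. a \<le> m \<and> b \<le> m}" by blast
next
  fix x assume "x \<in> {unit_vec a - unit_vec b | a b. a \<le> m \<and> b \<le> m}"
  then obtain a b where ab: "a \<le> m" "b \<le> m" "x = unit_vec a - unit_vec b" by blast
  have "(\<Sum>i<m. max (unit_vec c i - unit_vec d i) 0) \<le> 1" for c d
  proof -
    have "(\<Sum>i<m. max (unit_vec c i - unit_vec d i) 0) \<le> (\<Sum>i<m. unit_vec c i)"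
      by (intro sum_mono) (simp add: unit_vec_apply)
    then show ?thesis using sum_unit_vec_le_one[of c m] by linarith
  qed
  from this[of a b] this[of b a] show "x \<in> ball_a m 0 1"
    using ab by (simp add: ball_a_def d_a_eq Zm_diff unit_vec_Zm)
qed

lemma finite_ball_a_zero_one: "finite (ball_a m 0 1)"
proof -
  have "ball_a m 0 1 = (\<lambda>(a, b). unit_vec a - unit_vec b) ` ({..m} \<times> {..m})"
    by (auto simp: ball_a_zero_one)
  then show ?thesis by simp
qed

lemma unit_vec_mem_ball: "a \<le> m \<Longrightarrow> unit_vec a \<in> ball_a m 0 1"
  using ball_a_zero_one[of m] by force

section \<open>Perfect linear codes as kernels\<close>

lemma (in group) mult_inv_eq_one_iff:
  "x \<in> carrier G \<Longrightarrow> y \<in> carrier G \<Longrightarrow> x \<otimes> inv y = \<one> \<longleftrightarrow> x = y"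
  by (simp add: inv_solve_right')

locale lattice_hom = group_hom "lattice_group m" K \<psi> for m and K (structure) and \<psi>
begin

lemma hom_diff: "x \<in> Zm m \<Longrightarrow> y \<in> Zm m \<Longrightarrow> \<psi> (x - y) = \<psi> x \<otimes> inv \<psi> y"
  using hom_mult[of x "inv\<^bsub>lattice_group m\<^esub> y"] hom_inv[of y]
  by (simp add: Zm_def)

lemma hom_zero [simp]: "\<psi> 0 = \<one>"
  using hom_one by simp

lemma diff_mem_kernel_iff:
  "x \<in> Zm m \<Longrightarrow> y \<in> Zm m \<Longrightarrow> x - y \<in> kernel (lattice_group m) K \<psi> \<longleftrightarrow> \<psi> x = \<psi> y"
  by (simp add: kernel_def Zm_diff hom_diff mult_inv_eq_one_iff)

lemma kernel_covers_iff:
  "(\<Union>c\<in>kernel (lattice_group m) K \<psi>. ball_a m c 1) = Zm m \<longleftrightarrow> \<psi> ` ball_a m 0 1 = \<psi> ` Zm m"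
proof
  assume cover: "(\<Union>c\<in>kernel (lattice_group m) K \<psi>. ball_a m c 1) = Zm m"
  show "\<psi> ` ball_a m 0 1 = \<psi> ` Zm m"
  proof (rule equalityI[OF image_mono[OF ball_a_subset_Zm] subsetI])
    fix g assume "g \<in> \<psi> ` Zm m"
    then obtain y where y: "y \<in> Zm m" "g = \<psi> y" by blast
    with cover obtain c where c: "c \<in> kernel (lattice_group m) K \<psi>" "y \<in> ball_a m c 1" by blast
    then have "c \<in> Zm m" by (simp add: kernel_def)
    with c have "y - c \<in> ball_a m 0 1" by (simp add: mem_ball_a_iff)
    moreover have "\<psi> (y - c) = \<psi> y"
      using c(1) y(1) \<open>c \<in> Zm m\<close> diff_mem_kernel_iff[of y "y - c"] by (simp add: Zm_diff)
    ultimately show "g \<in> \<psi> ` ball_a m 0 1" using y(2) by (metis image_eqI)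
  qed
next
  assume img: "\<psi> ` ball_a m 0 1 = \<psi> ` Zm m"
  show "(\<Union>c\<in>kernel (lattice_group m) K \<psi>. ball_a m c 1) = Zm m"
  proof (rule equalityI[OF UN_least[OF ball_a_subset_Zm] subsetI])
    fix y assume y: "y \<in> Zm m"
    with img obtain \<beta> where \<beta>: "\<beta> \<in> ball_a m 0 1" "\<psi> y = \<psi> \<beta>" by (metis imageE imageI)
    have "\<beta> \<in> Zm m" using \<beta>(1) ball_a_subset_Zm by blast
    then have "y - \<beta> \<in> kernel (lattice_group m) K \<psi>" "y - \<beta> \<in> Zm m"
      using y \<beta>(2) by (simp_all add: diff_mem_kernel_iff Zm_diff)
    moreover have "y \<in> ball_a m (y - \<beta>) 1" using \<beta>(1) \<open>y - \<beta> \<in> Zm m\<close> by (simp add: mem_ball_a_iff)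
    ultimately show "y \<in> (\<Union>c\<in>kernel (lattice_group m) K \<psi>. ball_a m c 1)" by blast
  qed
qed

lemma kernel_packing_iff:
  "(\<forall>c\<in>kernel (lattice_group m) K \<psi>. \<forall>c'\<in>kernel (lattice_group m) K \<psi>.
      c \<noteq> c' \<longrightarrow> ball_a m c 1 \<inter> ball_a m c' 1 = {})
   \<longleftrightarrow> inj_on \<psi> (ball_a m 0 1)"
proof
  assume disj: "\<forall>c\<in>kernel (lattice_group m) K \<psi>. \<forall>c'\<in>kernel (lattice_group m) K \<psi>.
      c \<noteq> c' \<longrightarrow> ball_a m c 1 \<inter> ball_a m c' 1 = {}"
  show "inj_on \<psi> (ball_a m 0 1)"
  proof (rule inj_onI)
    fix \<beta> \<beta>' assume \<beta>: "\<beta> \<in> ball_a m 0 1" "\<beta>' \<in> ball_a m 0 1" "\<psi> \<beta> = \<psi> \<beta>'"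
    then have Z: "\<beta> \<in> Zm m" "\<beta>' \<in> Zm m" using ball_a_subset_Zm by blast+
    have "\<beta> - \<beta>' \<in> kernel (lattice_group m) K \<psi>"
      using Z \<beta>(3) by (simp add: diff_mem_kernel_iff)
    moreover have "0 \<in> kernel (lattice_group m) K \<psi>"
      by (simp add: kernel_def Zm_def)
    moreover have "\<beta> \<in> ball_a m (\<beta> - \<beta>') 1 \<inter> ball_a m 0 1"
      using \<beta> Z by (simp add: mem_ball_a_iff Zm_diff)
    ultimately have "\<beta> - \<beta>' = 0" using disj by blast
    then show "\<beta> = \<beta>'" by simp
  qed
next
  assume inj: "inj_on \<psi> (ball_a m 0 1)"
  show "\<forall>c\<in>kernel (lattice_group m) K \<psi>. \<forall>c'\<in>kernel (lattice_group m) K \<psi>.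
      c \<noteq> c' \<longrightarrow> ball_a m c 1 \<inter> ball_a m c' 1 = {}"
  proof (intro ballI impI equals0I)
    fix c c' z
    assume c: "c \<in> kernel (lattice_group m) K \<psi>" "c' \<in> kernel (lattice_group m) K \<psi>" "c \<noteq> c'"
      and z: "z \<in> ball_a m c 1 \<inter> ball_a m c' 1"
    have Z: "c \<in> Zm m" "c' \<in> Zm m" "z \<in> Zm m"
      using c z ball_a_subset_Zm by (auto simp: kernel_def)
    then have \<beta>: "z - c \<in> ball_a m 0 1" "z - c' \<in> ball_a m 0 1"
      using z by (simp_all add: mem_ball_a_iff)
    have "\<psi> (z - c) = \<psi> z" "\<psi> (z - c') = \<psi> z"
      using c Z by (simp_all add: hom_diff kernel_def)
    with inj \<beta> have "z - c = z - c'" by (metis inj_onD)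
    with c(3) show False by simp
  qed
qed

theorem perfect_code_kernel_iff:
  "perfect_code m 1 (kernel (lattice_group m) K \<psi>) \<longleftrightarrow> bij_betw \<psi> (ball_a m 0 1) (\<psi> ` Zm m)"
  unfolding perfect_code_def bij_betw_def kernel_covers_iff kernel_packing_iff
  by (auto simp: kernel_def)

end

section \<open>Planar difference sets\<close>

definition unique_differences :: "('a, 'b) monoid_scheme \<Rightarrow> 'a set \<Rightarrow> bool" where
  "unique_differences G D \<longleftrightarrow>
     (\<forall>g\<in>carrier G. g \<noteq> \<one>\<^bsub>G\<^esub> \<longrightarrow> (\<exists>!p. p \<in> D \<times> D \<and> g = fst p \<otimes>\<^bsub>G\<^esub> inv\<^bsub>G\<^esub> (snd p)))"

lemma abelian_planar_difference_set_iff: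
  "abelian_planar_difference_set G D m \<longleftrightarrow>
     comm_group G \<and> finite (carrier G) \<and> card (carrier G) = m^2 + m + 1 \<and>
     D \<subseteq> carrier G \<and> card D = m + 1 \<and> unique_differences G D"
  by (simp add: abelian_planar_difference_set_def unique_differences_def)

context group
begin

lemma bij_betw_differences:
  assumes D: "D \<subseteq> carrier G" and uniq: "unique_differences G D"
  shows "bij_betw (\<lambda>p. fst p \<otimes> inv (snd p)) (D \<times> D - (\<lambda>x. (x, x)) ` D) (carrier G - {\<one>})"
    (is "bij_betw ?diff ?P _")
proof (rule bij_betw_imageI)
  have diff_P: "?diff p \<in> carrier G - {\<one>}" if p: "p \<in> ?P" for p
  proof -
    obtain x y where "p = (x, y)" "x \<in> D" "y \<in> D" "x \<noteq> y" using p by auto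
    moreover have "x \<in> carrier G" "y \<in> carrier G" using D \<open>x \<in> D\<close> \<open>y \<in> D\<close> by auto
    ultimately show ?thesis by (simp add: mult_inv_eq_one_iff)
  qed
  show "inj_on ?diff ?P"
  proof (rule inj_onI)
    fix p q assume pq: "p \<in> ?P" "q \<in> ?P" "?diff p = ?diff q"
    have "\<exists>!p'. p' \<in> D \<times> D \<and> ?diff p = ?diff p'"
      using uniq diff_P[OF pq(1)] unfolding unique_differences_def by simp
    moreover have "p \<in> D \<times> D" "q \<in> D \<times> D" using pq(1,2) by simp_all
    ultimately show "p = q" using pq(3) by (metis (mono_tags, lifting))
  qed
  show "?diff ` ?P = carrier G - {\<one>}"
  proof (rule equalityI[OF image_subsetI[OF diff_P] subsetI])
    fix g assume g: "g \<in> carrier G - {\<one>}"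
    with uniq obtain p where p: "p \<in> D \<times> D" "g = ?diff p"
      unfolding unique_differences_def by blast
    then obtain x y where xy: "p = (x, y)" "x \<in> D" "y \<in> D" by blast
    with g p D have "x \<noteq> y" by auto
    with p xy have "p \<in> ?P" by (simp add: image_iff)
    with p show "g \<in> ?diff ` ?P" by blast
  qed
qed

lemma card_carrier_of_unique_differences:
  assumes fin: "finite (carrier G)" and D: "D \<subseteq> carrier G" and uniq: "unique_differences G D"
  shows "card (carrier G) = card D ^ 2 - card D + 1"
proof -
  have finD: "finite D" using fin D finite_subset by blast
  have "card (carrier G - {\<one>}) = card (D \<times> D - (\<lambda>x. (x, x)) ` D)"
    using bij_betw_differences[OF D uniq] by (simp add: bij_betw_same_card)
  also have "\<dots> = card (D \<times> D) - card ((\<lambda>x. (x, x)) ` D)"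
    using finD by (intro card_Diff_subset) auto
  also have "\<dots> = card D ^ 2 - card D"
    by (simp add: card_image inj_on_def card_cartesian_product power2_eq_square)
  finally show ?thesis
    using fin by (metis Suc_eq_plus1 card_Suc_Diff1 one_closed)
qed

lemma unique_differences_eq_iff:
  assumes "unique_differences G D" "D \<subseteq> carrier G" and "x \<in> D" "y \<in> D" "z \<in> D" "w \<in> D"
  shows "x \<otimes> inv y = z \<otimes> inv w \<longleftrightarrow> x = y \<and> z = w \<or> x = z \<and> y = w"
proof -
  have G: "x \<in> carrier G" "y \<in> carrier G" "z \<in> carrier G" "w \<in> carrier G"
    using assms(2-) by auto
  show ?thesis
  proof (cases "x = y")
    case True
    then show ?thesis using G mult_inv_eq_one_iff[of z w] by auto
  next
    case False
    then have "x \<otimes> inv y \<noteq> \<one>" using G by (simp add: mult_inv_eq_one_iff)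
    with assms(1) G have "\<exists>!p. p \<in> D \<times> D \<and> x \<otimes> inv y = fst p \<otimes> inv (snd p)"
      by (simp add: unique_differences_def)
    then obtain p where p: "\<And>q. q \<in> D \<times> D \<Longrightarrow> x \<otimes> inv y = fst q \<otimes> inv (snd q) \<Longrightarrow> q = p"
      by (elim ex1E) blast
    have "(z, w) = (x, y)" if "x \<otimes> inv y = z \<otimes> inv w"
      using p[of "(x, y)"] p[of "(z, w)"] that assms(3-) by simp
    with False show ?thesis by auto
  qed
qed

end

lemma unique_differences_iso:
  assumes iso: "\<phi> \<in> iso H G" and "group H" "group G" "D \<subseteq> carrier H"
    and uniq: "unique_differences H D"
  shows "unique_differences G (\<phi> ` D)"
  unfolding unique_differences_def
proof (intro ballI impI)
  interpret group_hom H G \<phi>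
    using assms(1-3) by (simp add: group_hom_def group_hom_axioms_def iso_def)
  have inj: "inj_on \<phi> (carrier H)" and img: "\<phi> ` carrier H = carrier G"
    using iso by (simp_all add: iso_def bij_betw_def)
  have \<phi>_diff: "\<phi> (fst p \<otimes>\<^bsub>H\<^esub> inv\<^bsub>H\<^esub> (snd p)) = \<phi> (fst p) \<otimes>\<^bsub>G\<^esub> inv\<^bsub>G\<^esub> \<phi> (snd p)"
    "fst p \<otimes>\<^bsub>H\<^esub> inv\<^bsub>H\<^esub> (snd p) \<in> carrier H" if "p \<in> D \<times> D" for p
    using that \<open>D \<subseteq> carrier H\<close> by (auto simp: subset_iff)
  fix g assume g: "g \<in> carrier G" "g \<noteq> \<one>\<^bsub>G\<^esub>"
  then obtain a where a: "a \<in> carrier H" "g = \<phi> a" using img by blast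
  with g(2) have "a \<noteq> \<one>\<^bsub>H\<^esub>" by auto
  with uniq a(1) obtain p where p: "p \<in> D \<times> D" "a = fst p \<otimes>\<^bsub>H\<^esub> inv\<^bsub>H\<^esub> (snd p)"
    and p_unique: "\<And>p'. p' \<in> D \<times> D \<Longrightarrow> a = fst p' \<otimes>\<^bsub>H\<^esub> inv\<^bsub>H\<^esub> (snd p') \<Longrightarrow> p' = p"
    unfolding unique_differences_def by (elim ballE ex1E impE) blast+
  show "\<exists>!q. q \<in> \<phi> ` D \<times> \<phi> ` D \<and> g = fst q \<otimes>\<^bsub>G\<^esub> inv\<^bsub>G\<^esub> (snd q)"
  proof (rule ex1I[of _ "map_prod \<phi> \<phi> p"])
    show "map_prod \<phi> \<phi> p \<in> \<phi> ` D \<times> \<phi> ` D \<and>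
        g = fst (map_prod \<phi> \<phi> p) \<otimes>\<^bsub>G\<^esub> inv\<^bsub>G\<^esub> snd (map_prod \<phi> \<phi> p)"
      using p a \<phi>_diff[OF p(1)] by auto
  next
    fix q assume q: "q \<in> \<phi> ` D \<times> \<phi> ` D \<and> g = fst q \<otimes>\<^bsub>G\<^esub> inv\<^bsub>G\<^esub> snd q"
    then obtain p' where p': "p' \<in> D \<times> D" "q = map_prod \<phi> \<phi> p'" by auto
    with q a \<phi>_diff[OF p'(1)] have "\<phi> a = \<phi> (fst p' \<otimes>\<^bsub>H\<^esub> inv\<^bsub>H\<^esub> (snd p'))" by simp
    with inj a(1) \<phi>_diff(2)[OF p'(1)] have "a = fst p' \<otimes>\<^bsub>H\<^esub> inv\<^bsub>H\<^esub> (snd p')"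
      by (auto dest: inj_onD)
    with p' p_unique show "q = map_prod \<phi> \<phi> p" by blast
  qed
qed

lemma abelian_planar_difference_set_iso:
  assumes pds: "abelian_planar_difference_set H D m" and iso: "\<phi> \<in> iso H G" and "group G"
  shows "abelian_planar_difference_set G (\<phi> ` D) m"
proof -
  have H: "comm_group H" "finite (carrier H)" "card (carrier H) = m^2 + m + 1" "D \<subseteq> carrier H"
    "card D = m + 1" "unique_differences H D"
    using pds by (simp_all add: abelian_planar_difference_set_iff)
  have bij: "bij_betw \<phi> (carrier H) (carrier G)"
    using iso by (simp add: iso_def)
  have "comm_group G"
    using comm_group.iso_imp_comm_group[OF H(1)] iso group.is_monoid[OF \<open>group G\<close>]
    by (auto simp: is_iso_def)
  moreover have "unique_differences G (\<phi> ` D)"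
    using unique_differences_iso iso H(1,4,6) \<open>group G\<close> comm_group.axioms(2) by blast
  moreover have "card (\<phi> ` D) = m + 1"
    using H(4,5) bij card_image[OF inj_on_subset] by (fastforce simp: bij_betw_def)
  moreover have "\<phi> ` D \<subseteq> carrier G"
    using H(4) bij by (auto simp: bij_betw_def)
  ultimately show ?thesis
    using H bij by (simp add: abelian_planar_difference_set_iff bij_betw_same_card bij_betw_finite)
qed

lemma ex_nat_abelian_planar_difference_set:
  assumes "abelian_planar_difference_set H D m"
  shows "\<exists>(G :: nat monoid) D'. abelian_planar_difference_set G D' m"
proof -
  have "group H" "finite (carrier H)"
    using assms by (auto simp: abelian_planar_difference_set_def comm_group_def)
  then obtain f :: "_ \<Rightarrow> nat" where "inj_on f (carrier H)"
    using finite_imp_inj_to_nat_seg by blast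
  then have "f \<in> iso H (image_group f H)" "group (image_group f H)"
    using \<open>group H\<close> by (simp_all add: inj_imp_image_group_iso group.inj_imp_image_group_is_group)
  with assms show ?thesis by (blast intro: abelian_planar_difference_set_iso)
qed

section \<open>From perfect codes to planar difference sets\<close>

context lattice_hom
begin

lemma unique_differences_unit_vec:
  assumes bij: "bij_betw \<psi> (ball_a m 0 1) (carrier K)"
  shows "unique_differences K ((\<psi> \<circ> unit_vec) ` {..m})"
  unfolding unique_differences_def
proof (intro ballI impI)
  have inj: "inj_on \<psi> (ball_a m 0 1)" and img: "\<psi> ` ball_a m 0 1 = carrier K"
    using bij by (simp_all add: bij_betw_def)
  have diff: "\<psi> (unit_vec a) \<otimes> inv \<psi> (unit_vec b) = \<psi> (unit_vec a - unit_vec b)"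
    if "a \<le> m" "b \<le> m" for a b
    using that by (simp add: hom_diff unit_vec_Zm)
  fix g assume g: "g \<in> carrier K" "g \<noteq> \<one>"
  obtain a b where ab: "a \<le> m" "b \<le> m" "g = \<psi> (unit_vec a - unit_vec b)"
  proof -
    obtain \<beta> where "\<beta> \<in> ball_a m 0 1" "g = \<psi> \<beta>" using g(1) img by blast
    then show ?thesis using that by (auto simp: ball_a_zero_one)
  qed
  with g(2) have "a \<noteq> b" by auto
  show "\<exists>!p. p \<in> (\<psi> \<circ> unit_vec) ` {..m} \<times> (\<psi> \<circ> unit_vec) ` {..m} \<and> g = fst p \<otimes> inv (snd p)"
  proof (rule ex1I[of _ "(\<psi> (unit_vec a), \<psi> (unit_vec b))"])
    show "(\<psi> (unit_vec a), \<psi> (unit_vec b)) \<in> (\<psi> \<circ> unit_vec) ` {..m} \<times> (\<psi> \<circ> unit_vec) ` {..m} \<and>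
        g = fst (\<psi> (unit_vec a), \<psi> (unit_vec b)) \<otimes> inv snd (\<psi> (unit_vec a), \<psi> (unit_vec b))"
      using ab diff by auto
  next
    fix q assume q: "q \<in> (\<psi> \<circ> unit_vec) ` {..m} \<times> (\<psi> \<circ> unit_vec) ` {..m} \<and> g = fst q \<otimes> inv snd q"
    then obtain c d where cd: "c \<le> m" "d \<le> m" "q = (\<psi> (unit_vec c), \<psi> (unit_vec d))" by auto
    with q ab diff have "\<psi> (unit_vec c - unit_vec d) = \<psi> (unit_vec a - unit_vec b)" by simp
    moreover have "unit_vec c - unit_vec d \<in> ball_a m 0 1" "unit_vec a - unit_vec b \<in> ball_a m 0 1"
      using ab cd by (auto simp: ball_a_zero_one)
    ultimately have "unit_vec c - unit_vec d = unit_vec a - unit_vec b"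
      using inj by (auto dest: inj_onD)
    with \<open>a \<noteq> b\<close> have "c = a" "d = b" by (auto simp: unit_vec_diff_eq_iff)
    with cd show "q = (\<psi> (unit_vec a), \<psi> (unit_vec b))" by simp
  qed
qed

lemma abelian_planar_difference_set_of_bij:
  assumes "comm_group K" and bij: "bij_betw \<psi> (ball_a m 0 1) (carrier K)"
  shows "abelian_planar_difference_set K ((\<psi> \<circ> unit_vec) ` {..m}) m"
proof -
  have inj: "inj_on \<psi> (ball_a m 0 1)" and img: "\<psi> ` ball_a m 0 1 = carrier K"
    using bij by (simp_all add: bij_betw_def)
  have fin: "finite (carrier K)"
    using img finite_ball_a_zero_one by (metis finite_imageI)
  have D: "(\<psi> \<circ> unit_vec) ` {..m} \<subseteq> carrier K"
    using img unit_vec_mem_ball by auto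
  have "inj_on (\<psi> \<circ> unit_vec) {..m}"
  proof (rule inj_onI)
    fix a b assume "a \<in> {..m}" "b \<in> {..m}" "(\<psi> \<circ> unit_vec) a = (\<psi> \<circ> unit_vec) b"
    with inj unit_vec_mem_ball have "unit_vec a = unit_vec b" by (auto dest: inj_onD)
    then show "a = b" by (simp add: unit_vec_inj)
  qed
  then have card_D: "card ((\<psi> \<circ> unit_vec) ` {..m}) = m + 1"
    using card_image by fastforce
  have uniq: "unique_differences K ((\<psi> \<circ> unit_vec) ` {..m})"
    using bij by (rule unique_differences_unit_vec)
  then have "card (carrier K) = m^2 + m + 1"
    using H.card_carrier_of_unique_differences[OF fin D] card_D by (simp add: power2_eq_square)
  then show ?thesis
    using assms(1) fin D card_D uniq by (simp add: abelian_planar_difference_set_iff)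
qed

end

lemma (in normal) kernel_r_coset_Mod: "kernel G (G Mod H) (\<lambda>a. H #> a) = H"
proof -
  have "H #> a = H \<longleftrightarrow> a \<in> H" if "a \<in> carrier G" for a
    using that rcos_self[OF that subgroup_axioms] rcos_const[OF is_group] by auto
  then show ?thesis
    using subset by (auto simp: kernel_def)
qed

lemma lattice_hom_quotient:
  assumes "subgroup C (lattice_group m)"
  shows "lattice_hom m (lattice_group m Mod C) (\<lambda>a. C #>\<^bsub>lattice_group m\<^esub> a)"
proof -
  interpret comm_group "lattice_group m" by (rule comm_group_lattice_group)
  interpret normal C "lattice_group m" using assms by (rule subgroup_imp_normal)
  show ?thesis
    by (simp add: lattice_hom_def group_hom_def group_hom_axioms_def is_group
        factorgroup_is_group r_coset_hom_Mod)
qed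

lemma abelian_planar_difference_set_quotient:
  assumes "linear_code m C" and "perfect_code m 1 C"
  shows "abelian_planar_difference_set (lattice_group m Mod C)
           ((\<lambda>a. C #>\<^bsub>lattice_group m\<^esub> unit_vec a) ` {..m}) m"
proof -
  have C: "subgroup C (lattice_group m)"
    using assms(1) by (simp add: linear_code_iff_subgroup)
  interpret L: comm_group "lattice_group m" by (rule comm_group_lattice_group)
  interpret N: normal C "lattice_group m" using C by (rule L.subgroup_imp_normal)
  interpret lattice_hom m "lattice_group m Mod C" "\<lambda>a. C #>\<^bsub>lattice_group m\<^esub> a"
    using C by (rule lattice_hom_quotient)
  have "bij_betw (\<lambda>a. C #>\<^bsub>lattice_group m\<^esub> a) (ball_a m 0 1) (carrier (lattice_group m Mod C))"
    using assms(2) perfect_code_kernel_iff by (simp add: N.kernel_r_coset_Mod carrier_FactGroup)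
  from abelian_planar_difference_set_of_bij[OF L.abelian_FactGroup[OF C] this]
  show ?thesis by (simp add: comp_def)
qed

section \<open>From planar difference sets to perfect codes\<close>

context comm_group
begin

definition difference_set_hom :: "nat \<Rightarrow> (nat \<Rightarrow> 'a) \<Rightarrow> (nat \<Rightarrow> int) \<Rightarrow> 'a" where
  "difference_set_hom m h x = (\<Otimes>i\<in>{..<m}. (h (Suc i) \<otimes> inv h 0) [^] x i)"

context
  fixes m and h :: "nat \<Rightarrow> 'a"
  assumes h: "h ` {..m} \<subseteq> carrier G"
begin

lemma difference_set_closed: "a \<le> m \<Longrightarrow> h a \<in> carrier G"
  using h by auto

lemma difference_set_hom_factor_closed:
  "(\<lambda>i. (h (Suc i) \<otimes> inv h 0) [^] (x :: nat \<Rightarrow> int) i) \<in> {..<m} \<rightarrow> carrier G"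
  by (simp add: difference_set_closed)

lemma difference_set_hom_hom: "difference_set_hom m h \<in> hom (lattice_group m) G"
proof (rule homI)
  fix x y :: "nat \<Rightarrow> int"
  have "difference_set_hom m h (x + y)
      = (\<Otimes>i\<in>{..<m}. (h (Suc i) \<otimes> inv h 0) [^] x i \<otimes> (h (Suc i) \<otimes> inv h 0) [^] y i)"
    unfolding difference_set_hom_def
    by (intro finprod_cong') (auto simp: int_pow_mult difference_set_closed)
  also have "\<dots> = difference_set_hom m h x \<otimes> difference_set_hom m h y"
    unfolding difference_set_hom_def by (simp add: difference_set_hom_factor_closed)
  finally show "difference_set_hom m h (x \<otimes>\<^bsub>lattice_group m\<^esub> y)
      = difference_set_hom m h x \<otimes> difference_set_hom m h y"
    by simp
qed (simp add: difference_set_hom_def difference_set_hom_factor_closed)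

lemma difference_set_hom_unit_vec:
  assumes "a \<le> m" shows "difference_set_hom m h (unit_vec a) = h a \<otimes> inv h 0"
proof (cases a)
  case 0
  then show ?thesis by (simp add: difference_set_hom_def difference_set_closed)
next
  case (Suc j)
  have "difference_set_hom m h (unit_vec a) = (\<Otimes>i\<in>{..<m}. if j = i then h (Suc i) \<otimes> inv h 0 else \<one>)"
    unfolding difference_set_hom_def using Suc
    by (intro finprod_cong') (auto simp: unit_vec_apply difference_set_closed)
  also have "\<dots> = h a \<otimes> inv h 0"
    using Suc assms by (subst finprod_singleton) (auto simp: difference_set_closed)
  finally show ?thesis .
qed

lemma lattice_hom_difference_set_hom: "lattice_hom m G (difference_set_hom m h)"
  by (simp add: lattice_hom_def group_hom_def group_hom_axioms_def is_group difference_set_hom_hom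
      comm_group.axioms(2)[OF comm_group_lattice_group])

lemma difference_set_hom_unit_vec_diff:
  assumes "a \<le> m" "b \<le> m"
  shows "difference_set_hom m h (unit_vec a - unit_vec b) = h a \<otimes> inv h b"
proof -
  have "h a \<in> carrier G" "h b \<in> carrier G" "h 0 \<in> carrier G"
    using assms by (simp_all add: difference_set_closed)
  then have "h a \<otimes> inv h 0 \<otimes> inv (h b \<otimes> inv h 0) = h a \<otimes> inv h b"
    by (simp add: inv_mult_group m_assoc inv_solve_left')
  with assms show ?thesis
    by (simp add: lattice_hom.hom_diff[OF lattice_hom_difference_set_hom] unit_vec_Zm
        difference_set_hom_unit_vec)
qed

lemma inj_on_difference_set_hom:
  assumes inj: "inj_on h {..m}" and uniq: "unique_differences G (h ` {..m})"
  shows "inj_on (difference_set_hom m h) (ball_a m 0 1)"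
proof (rule inj_onI)
  fix x y assume "x \<in> ball_a m 0 1" "y \<in> ball_a m 0 1"
    and eq: "difference_set_hom m h x = difference_set_hom m h y"
  then obtain a b c d where abcd: "a \<le> m" "b \<le> m" "c \<le> m" "d \<le> m"
    "x = unit_vec a - unit_vec b" "y = unit_vec c - unit_vec d"
    by (auto simp: ball_a_zero_one)
  with eq have "h a \<otimes> inv h b = h c \<otimes> inv h d"
    by (simp add: difference_set_hom_unit_vec_diff)
  then have "h a = h b \<and> h c = h d \<or> h a = h c \<and> h b = h d"
    using unique_differences_eq_iff[OF uniq] h abcd(1-4) by simp
  then have "a = b \<and> c = d \<or> a = c \<and> b = d"
    using inj abcd(1-4) by (auto dest: inj_onD)
  then show "x = y"
    using abcd(5,6) by (simp add: unit_vec_diff_eq_iff)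
qed

lemma difference_set_hom_image:
  assumes uniq: "unique_differences G (h ` {..m})"
  shows "difference_set_hom m h ` ball_a m 0 1 = carrier G"
proof (intro equalityI subsetI)
  fix g assume g: "g \<in> carrier G"
  obtain a b where "a \<le> m" "b \<le> m" "g = h a \<otimes> inv h b"
  proof (cases "g = \<one>")
    case True
    then show ?thesis using that[of 0 0] by (simp add: difference_set_closed)
  next
    case False
    with g uniq obtain p where "p \<in> h ` {..m} \<times> h ` {..m}" "g = fst p \<otimes> inv (snd p)"
      unfolding unique_differences_def by (metis ex1_implies_ex)
    then show ?thesis using that by auto
  qed
  then have "g = difference_set_hom m h (unit_vec a - unit_vec b)"
    by (simp add: difference_set_hom_unit_vec_diff)
  moreover have "unit_vec a - unit_vec b \<in> ball_a m 0 1"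
    using \<open>a \<le> m\<close> \<open>b \<le> m\<close> by (auto simp: ball_a_zero_one)
  ultimately show "g \<in> difference_set_hom m h ` ball_a m 0 1" by blast
next
  fix g assume "g \<in> difference_set_hom m h ` ball_a m 0 1"
  then show "g \<in> carrier G"
    using difference_set_hom_hom ball_a_subset_Zm[of m 0 1] by (auto simp: hom_def Pi_def)
qed

lemma perfect_code_kernel_difference_set_hom:
  assumes "inj_on h {..m}" and "unique_differences G (h ` {..m})"
  shows "perfect_code m 1 (kernel (lattice_group m) G (difference_set_hom m h))"
proof -
  interpret lattice_hom m G "difference_set_hom m h"
    by (rule lattice_hom_difference_set_hom)
  have bij: "bij_betw (difference_set_hom m h) (ball_a m 0 1) (carrier G)"
    using assms by (simp add: bij_betw_def inj_on_difference_set_hom difference_set_hom_image)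
  moreover have "difference_set_hom m h ` Zm m = carrier G"
    using hom_closed image_mono[OF ball_a_subset_Zm, of "difference_set_hom m h" m 0 1] bij
    by (force simp: bij_betw_def)
  ultimately show ?thesis
    by (simp add: perfect_code_kernel_iff)
qed

end

end

lemma planar_difference_set_imp_ex_perfect_linear_code:
  assumes "abelian_planar_difference_set G D m"
  shows "\<exists>C. linear_code m C \<and> perfect_code m 1 C"
proof -
  have G: "comm_group G" "D \<subseteq> carrier G" "unique_differences G D"
    and "finite D" "card D = m + 1"
    using assms finite_subset by (auto simp: abelian_planar_difference_set_iff)
  interpret comm_group G by (fact G(1))
  obtain h where "bij_betw h {..m} D"
    using ex_bij_betw_nat_finite[OF \<open>finite D\<close>] \<open>card D = m + 1\<close>
    by (auto simp: atLeast0LessThan lessThan_Suc_atMost)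
  then have h: "h ` {..m} = D" "inj_on h {..m}" by (simp_all add: bij_betw_def)
  interpret lattice_hom m G "difference_set_hom m h"
    using G(2) h(1) by (simp add: lattice_hom_difference_set_hom)
  have "linear_code m (kernel (lattice_group m) G (difference_set_hom m h))"
    using subgroup_kernel by (simp add: linear_code_iff_subgroup)
  moreover have "perfect_code m 1 (kernel (lattice_group m) G (difference_set_hom m h))"
    using G(2,3) h by (simp add: perfect_code_kernel_difference_set_hom)
  ultimately show ?thesis by blast
qed

theorem mainTheorem9:
  fixes m :: nat
  assumes "m \<ge> 1"
  shows "(\<exists>C. linear_code m C \<and> perfect_code m 1 C) \<longleftrightarrow>
         (\<exists>(G :: nat monoid) D. abelian_planar_difference_set G D m)"
proof
  assume "\<exists>C. linear_code m C \<and> perfect_code m 1 C"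
  then obtain C where "linear_code m C" "perfect_code m 1 C" by blast
  then have "abelian_planar_difference_set (lattice_group m Mod C)
      ((\<lambda>a. C #>\<^bsub>lattice_group m\<^esub> unit_vec a) ` {..m}) m"
    by (rule abelian_planar_difference_set_quotient)
  then show "\<exists>(G :: nat monoid) D. abelian_planar_difference_set G D m"
    by (rule ex_nat_abelian_planar_difference_set)
next
  assume "\<exists>(G :: nat monoid) D. abelian_planar_difference_set G D m"
  then show "\<exists>C. linear_code m C \<and> perfect_code m 1 C"
    using planar_difference_set_imp_ex_perfect_linear_code by blast
qed

end
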